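(* Let $\Delta$ be a pure simplicial complex of dimension $m-1\ge2$ whose clique decomposition $\Delta=\Delta_1\cup\cdots\cup\Delta_r$ satisfies conditions (i) and (ii), such that each clique is a single $(m-1)$-simplex and $G_\Delta$ is the complete graph $K_r$. Then $\Delta$ is closed if and only if $m\ge r$.
   Context: $\Delta$ is a pure $(m-1)$-dimensional simplicial complex on $[n]$. Clique decomposition: let $\mathcal{S}$ be the set of simplices $\Gamma$ with vertices in $[n]$, $\dim\Gamma\ge m-1$, whose $(m-1)$-skeleton is contained in $\Delta$; the maximal elements $\Gamma_1,\dots,\Gamma_r$ of $\mathcal{S}$ give the cliques $\Delta_i=\Gamma_i^{(m-1)}$, $\Delta=\Delta_1\cup\cdots\cup\Delta_r$; $V(\Delta_i)$ is the vertex set of $\Delta_i$. Conditions: (i) $|V(\Delta_i)\cap V(\Delta_j)|\le1$ for all $i<j$; (ii) $V(\Delta_i)\cap V(\Delta_j)\cap V(\Delta_k)=\emptyset$ for all $i<j<k$. $G_\Delta$ is the simple graph on vertices $v_1,\dots,v_r$ with an edge $\{v_i,v_j\}$ ($i\ne j$) iff $V(\Delta_i)\cap V(\Delta_j)\ne\emptyset$. $\Delta$ is closed with respect to a labeling of its vertices by $[n]$ if for any two facets $F=\{a_1<\dots<a_m\}$, $G=\{b_1<\dots<b_m\}$ with $a_i=b_i$ for some $i$, every $m$-subset of $F\cup G$ is a facet of $\Delta$; $\Delta$ is closed if some labeling makes it closed. *)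

theory Defs
  imports Main
begin

text \<open>A pure (m-1)-dimensional simplicial complex on [n] = {1..n} is represented by
its set of facets F: a nonempty family of m-subsets of {1..n}.\<close>
definition pure_complex :: "nat \<Rightarrow> nat \<Rightarrow> nat set set \<Rightarrow> bool" where
  "pure_complex n m F \<longleftrightarrow> F \<noteq> {} \<and> (\<forall>A\<in>F. A \<subseteq> {1..n} \<and> card A = m)"

definition skel :: "nat \<Rightarrow> nat set \<Rightarrow> nat set set" where
  "skel m G = {A. A \<subseteq> G \<and> card A = m}"

definition simplS :: "nat \<Rightarrow> nat \<Rightarrow> nat set set \<Rightarrow> nat set set" where
  "simplS n m F = {G. G \<subseteq> {1..n} \<and> card G \<ge> m \<and> skel m G \<subseteq> F}"

definition maxsimp :: "nat \<Rightarrow> nat \<Rightarrow> nat set set \<Rightarrow> nat set set" where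
  "maxsimp n m F = {G \<in> simplS n m F. \<forall>H\<in>simplS n m F. G \<subseteq> H \<longrightarrow> H = G}"

definition cliques :: "nat \<Rightarrow> nat \<Rightarrow> nat set set \<Rightarrow> nat set set set" where
  "cliques n m F = skel m ` maxsimp n m F"

definition Vtx :: "nat set set \<Rightarrow> nat set" where
  "Vtx D = \<Union>D"

definition cond_i :: "nat \<Rightarrow> nat \<Rightarrow> nat set set \<Rightarrow> bool" where
  "cond_i n m F \<longleftrightarrow> (\<forall>Di\<in>cliques n m F. \<forall>Dj\<in>cliques n m F. Di \<noteq> Dj \<longrightarrow>
      card (Vtx Di \<inter> Vtx Dj) \<le> 1)"

definition cond_ii :: "nat \<Rightarrow> nat \<Rightarrow> nat set set \<Rightarrow> bool" where
  "cond_ii n m F \<longleftrightarrow> (\<forall>Di\<in>cliques n m F. \<forall>Dj\<in>cliques n m F. \<forall>Dk\<in>cliques n m F.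
      Di \<noteq> Dj \<and> Di \<noteq> Dk \<and> Dj \<noteq> Dk \<longrightarrow> Vtx Di \<inter> Vtx Dj \<inter> Vtx Dk = {})"

text \<open>G_Delta is the complete graph: any two distinct cliques share a vertex.\<close>
definition G_complete :: "nat \<Rightarrow> nat \<Rightarrow> nat set set \<Rightarrow> bool" where
  "G_complete n m F \<longleftrightarrow> (\<forall>Di\<in>cliques n m F. \<forall>Dj\<in>cliques n m F. Di \<noteq> Dj \<longrightarrow>
      Vtx Di \<inter> Vtx Dj \<noteq> {})"

text \<open>i-th smallest element (0-based) of a finite set of naturals.\<close>
definition ith :: "nat set \<Rightarrow> nat \<Rightarrow> nat" where
  "ith A i = sorted_list_of_set A ! i"

definition closed_wrt :: "nat \<Rightarrow> nat set set \<Rightarrow> bool" where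
  "closed_wrt m F \<longleftrightarrow> (\<forall>A\<in>F. \<forall>B\<in>F. (\<exists>i<m. ith A i = ith B i) \<longrightarrow>
      (\<forall>C. C \<subseteq> A \<union> B \<and> card C = m \<longrightarrow> C \<in> F))"

definition is_closed :: "nat \<Rightarrow> nat \<Rightarrow> nat set set \<Rightarrow> bool" where
  "is_closed n m F \<longleftrightarrow> (\<exists>\<sigma>. bij_betw \<sigma> {1..n} {1..n} \<and> closed_wrt m (image \<sigma> ` F))"

end

theory Submission
  imports Defs "HOL-Library.Product_Lexorder"
begin

(* Under these hypotheses the maximal simplices are exactly the facets, so the facets
   form a "one-point family": r sets of size m, any two meeting in exactly one vertex,
   no vertex in three.  Each facet then has exactly r - 1 shared vertices.
   - If r > m, let w be the smallest vertex under a given labeling.  A facet A containing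
     w has only m - 1 < r - 1 further vertices, so w is shared with a second facet B;
     both list w first, and exchanging a vertex of A - B for one of B - A yields an
     m-subset of A \<union> B that is not a facet.  So no labeling is closed.
   - If r \<le> m, enumerate the facets and order the vertices by the index of the first
     facet containing them, private vertices before shared ones.  The vertex common to
     facets a < b then has position \<le> a in facet b but \<ge> a + 1 in facet a (which has
     a private vertex), so no two facets agree in any position and closedness is vacuous. *)

lemma card_less_nth_strict_sorted:
  fixes xs :: "'a::linorder list"
  assumes sorted: "sorted_wrt (<) xs" and i: "i < length xs"
  shows "card {y \<in> set xs. y < xs ! i} = i"
proof -
  have less_iff: "xs ! j < xs ! i \<longleftrightarrow> j < i" if "j < length xs" for j
  proof (cases j i rule: linorder_cases)
    case greater
    then have "xs ! i < xs ! j" using sorted_wrt_nth_less[OF sorted] that by blast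
    then show ?thesis using greater by simp
  qed (use sorted_wrt_nth_less[OF sorted] i in auto)
  have "{y \<in> set xs. y < xs ! i} = (!) xs ` {0..<i}"
  proof
    show "{y \<in> set xs. y < xs ! i} \<subseteq> (!) xs ` {0..<i}"
      using less_iff by (auto simp: in_set_conv_nth)
    show "(!) xs ` {0..<i} \<subseteq> {y \<in> set xs. y < xs ! i}"
      using less_iff i by auto
  qed
  moreover have "inj_on ((!) xs) {0..<i}"
    using i sorted by (auto simp: inj_on_def nth_eq_iff_index_eq strict_sorted_iff)
  ultimately show ?thesis by (simp add: card_image)
qed

lemma ith_rank:
  assumes "finite X" "i < card X"
  shows "ith X i \<in> X" "card {y \<in> X. y < ith X i} = i"
proof -
  let ?xs = "sorted_list_of_set X"
  have "i < length ?xs" using assms by simp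
  then show "ith X i \<in> X" by (metis ith_def nth_mem set_sorted_list_of_set assms(1))
  have "card {y \<in> set ?xs. y < ?xs ! i} = i"
    using \<open>i < length ?xs\<close> by (intro card_less_nth_strict_sorted) simp_all
  then show "card {y \<in> X. y < ith X i} = i" using assms by (simp add: ith_def)
qed

lemma ith_eqI:
  assumes "finite X" "x \<in> X" "card {y \<in> X. y < x} = i"
  shows "ith X i = x"
proof -
  let ?xs = "sorted_list_of_set X"
  obtain j where j: "j < length ?xs" "?xs ! j = x"
    using assms by (metis in_set_conv_nth set_sorted_list_of_set)
  have "card {y \<in> set ?xs. y < ?xs ! j} = j"
    using j by (intro card_less_nth_strict_sorted) simp_all
  then show ?thesis using assms j by (simp add: ith_def)
qed

(* A family of m-sets is closed as soon as no vertex shared by two distinct members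
   occupies the same position in both: then the closedness hypothesis forces A = B. *)
lemma closed_wrtI_positions:
  assumes size: "\<And>A. A \<in> G \<Longrightarrow> finite A \<and> card A = m"
    and positions: "\<And>A B v. A \<in> G \<Longrightarrow> B \<in> G \<Longrightarrow> A \<noteq> B \<Longrightarrow> v \<in> A \<Longrightarrow> v \<in> B \<Longrightarrow>
         card {y \<in> A. y < v} \<noteq> card {y \<in> B. y < v}"
  shows "closed_wrt m G"
  unfolding closed_wrt_def
proof (intro ballI impI allI)
  fix A B C
  assume A: "A \<in> G" and B: "B \<in> G" and "\<exists>i<m. ith A i = ith B i"
    and C: "C \<subseteq> A \<union> B \<and> card C = m"
  then obtain i where i: "i < m" "ith A i = ith B i" by blast
  have "A = B"
  proof (rule ccontr)
    assume "A \<noteq> B"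
    have inA: "ith A i \<in> A" and rankA: "card {y \<in> A. y < ith A i} = i"
      using ith_rank[of A i] size[OF A] i(1) by auto
    have inB: "ith A i \<in> B" and rankB: "card {y \<in> B. y < ith A i} = i"
      using ith_rank[of B i] size[OF B] i by auto
    show False using positions[OF A B \<open>A \<noteq> B\<close> inA inB] rankA rankB by simp
  qed
  then have "C \<subseteq> A" using C by simp
  then have "C = A" using card_subset_eq[of A C] C size[OF A] by simp
  then show "C \<in> G" using A by simp
qed

(* One-point families: sets of size m, any two distinct ones meeting in exactly one
   point, no point in three of them.  This is the shape of the facets of our complex. *)
locale one_point_family =
  fixes m :: nat and F :: "'a set set"
  assumes facet_finite: "A \<in> F \<Longrightarrow> finite A"
    and facet_card: "A \<in> F \<Longrightarrow> card A = m"
    and meet_card: "A \<in> F \<Longrightarrow> B \<in> F \<Longrightarrow> A \<noteq> B \<Longrightarrow> card (A \<inter> B) = 1"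
    and no_triple: "A \<in> F \<Longrightarrow> B \<in> F \<Longrightarrow> C \<in> F \<Longrightarrow> A \<noteq> B \<Longrightarrow> A \<noteq> C \<Longrightarrow> B \<noteq> C \<Longrightarrow>
      A \<inter> B \<inter> C = {}"
begin

definition meet :: "'a set \<Rightarrow> 'a set \<Rightarrow> 'a" where
  "meet A B = the_elem (A \<inter> B)"

lemma meet_eq:
  assumes "A \<in> F" "B \<in> F" "A \<noteq> B"
  shows "A \<inter> B = {meet A B}"
proof -
  obtain x where "A \<inter> B = {x}" using meet_card[OF assms] by (rule card_1_singletonE)
  then show ?thesis by (simp add: meet_def)
qed

lemma meet_mem:
  assumes "A \<in> F" "B \<in> F" "A \<noteq> B"
  shows "meet A B \<in> A" "meet A B \<in> B"
  using meet_eq[OF assms] by auto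

lemma meet_unique:
  assumes "A \<in> F" "B \<in> F" "A \<noteq> B" "y \<in> A" "y \<in> B"
  shows "y = meet A B"
  using meet_eq[OF assms(1-3)] assms(4,5) by blast

(* By the no-triple condition, distinct members meet a fixed member A in distinct points. *)
lemma inj_on_meet:
  assumes "A \<in> F"
  shows "inj_on (meet A) (F - {A})"
proof (rule inj_onI)
  fix B C assume "B \<in> F - {A}" "C \<in> F - {A}" and eq: "meet A B = meet A C"
  then have B: "B \<in> F" "A \<noteq> B" and C: "C \<in> F" "A \<noteq> C" by auto
  show "B = C"
  proof (rule ccontr)
    assume "B \<noteq> C"
    then have "A \<inter> B \<inter> C = {}" using no_triple[OF assms B(1) C(1) B(2) C(2)] by simp
    moreover have "meet A B \<in> A \<inter> B" "meet A C \<in> A \<inter> C"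
      using meet_mem[OF assms B] meet_mem[OF assms C] by auto
    ultimately show False using eq by auto
  qed
qed

definition shared :: "'a set \<Rightarrow> 'a set" where
  "shared A = {y \<in> A. \<exists>C\<in>F. C \<noteq> A \<and> y \<in> C}"

lemma shared_eq_meets:
  assumes "A \<in> F"
  shows "shared A = meet A ` (F - {A})"
proof
  show "shared A \<subseteq> meet A ` (F - {A})"
  proof
    fix y assume "y \<in> shared A"
    then obtain C where C: "C \<in> F" "C \<noteq> A" "y \<in> A" "y \<in> C"
      unfolding shared_def by blast
    then have "y = meet A C" using meet_unique[OF assms C(1)] by simp
    then show "y \<in> meet A ` (F - {A})" using C by blast
  qed
  show "meet A ` (F - {A}) \<subseteq> shared A"
    using meet_mem[OF assms] unfolding shared_def by fastforce
qed

lemma card_shared: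
  assumes "finite F" "A \<in> F"
  shows "card (shared A) = card F - 1"
  using assms by (simp add: shared_eq_meets card_image inj_on_meet)

(* For m \<ge> 3, replacing a point of A - B by a point of B - A gives an m-subset of
   A \<union> B meeting A in m - 1 \<ge> 2 points, hence not a member. *)
lemma exchange_not_facet:
  assumes "m \<ge> 3" "A \<in> F" "B \<in> F" "A \<noteq> B"
  shows "\<exists>C. C \<subseteq> A \<union> B \<and> card C = m \<and> C \<notin> F"
proof -
  have "A - B \<noteq> {}"
  proof
    assume "A - B = {}"
    then have "A \<inter> B = A" by blast
    then show False using meet_card[of A B] facet_card[of A] assms by simp
  qed
  then obtain a where a: "a \<in> A" "a \<notin> B" by blast
  have "B - A \<noteq> {}"
  proof
    assume "B - A = {}"
    then have "B \<inter> A = B" by blast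
    then show False using meet_card[of B A] facet_card[of B] assms by simp
  qed
  then obtain b where b: "b \<in> B" "b \<notin> A" by blast
  define C where "C = insert b (A - {a})"
  have fA: "finite A" "card A = m" using facet_finite facet_card assms(2) by auto
  have card_C: "card C = m" using fA a b assms(1) by (simp add: C_def card_Diff_singleton)
  have "C \<notin> F"
  proof
    assume "C \<in> F"
    moreover have "C \<noteq> A" using b by (auto simp: C_def)
    ultimately have "card (C \<inter> A) = 1" using meet_card assms(2) by blast
    moreover have "A - {a} \<subseteq> C \<inter> A" by (auto simp: C_def)
    then have "card (A - {a}) \<le> card (C \<inter> A)" using fA by (intro card_mono) auto
    ultimately show False using fA a assms(1) by (simp add: card_Diff_singleton)
  qed
  moreover have "C \<subseteq> A \<union> B" using b by (auto simp: C_def)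
  ultimately show ?thesis using card_C by blast
qed

lemma relabel:
  assumes inj: "inj_on \<sigma> (\<Union>F)"
  shows "one_point_family m ((`) \<sigma> ` F)" "card ((`) \<sigma> ` F) = card F"
proof -
  have inj_A: "inj_on \<sigma> A" if "A \<in> F" for A
    using inj by (rule inj_on_subset) (use that in blast)
  have image_Int: "\<sigma> ` A \<inter> \<sigma> ` B = \<sigma> ` (A \<inter> B)" if "A \<in> F" "B \<in> F" for A B
    using inj that by (intro inj_on_image_Int[symmetric]) auto
  have image_eq: "\<sigma> ` A = \<sigma> ` B \<longleftrightarrow> A = B" if "A \<in> F" "B \<in> F" for A B
    using inj that by (intro inj_on_image_eq_iff) auto
  show "card ((`) \<sigma> ` F) = card F"
    using image_eq by (intro card_image inj_onI) simp
  show "one_point_family m ((`) \<sigma> ` F)"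
  proof
    fix A' assume "A' \<in> (`) \<sigma> ` F"
    then obtain A where "A \<in> F" "A' = \<sigma> ` A" by blast
    then show "finite A'" "card A' = m"
      using facet_finite facet_card card_image[OF inj_A] by auto
  next
    fix A' B' assume A': "A' \<in> (`) \<sigma> ` F" and B': "B' \<in> (`) \<sigma> ` F" and "A' \<noteq> B'"
    obtain A where A: "A \<in> F" "A' = \<sigma> ` A" using A' by blast
    obtain B where B: "B \<in> F" "B' = \<sigma> ` B" using B' by blast
    have AB: "A \<in> F" "B \<in> F" "A \<noteq> B" using A B \<open>A' \<noteq> B'\<close> by auto
    have "A' \<inter> B' = \<sigma> ` (A \<inter> B)" using image_Int A B by simp
    moreover have "inj_on \<sigma> (A \<inter> B)" using inj_A[OF AB(1)] by (rule inj_on_subset) blast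
    ultimately show "card (A' \<inter> B') = 1" using meet_card[OF AB] by (simp add: card_image)
  next
    fix A' B' C'
    assume A': "A' \<in> (`) \<sigma> ` F" and B': "B' \<in> (`) \<sigma> ` F" and C': "C' \<in> (`) \<sigma> ` F"
      and "A' \<noteq> B'" "A' \<noteq> C'" "B' \<noteq> C'"
    obtain A where A: "A \<in> F" "A' = \<sigma> ` A" using A' by blast
    obtain B where B: "B \<in> F" "B' = \<sigma> ` B" using B' by blast
    obtain C where C: "C \<in> F" "C' = \<sigma> ` C" using C' by blast
    have ABC: "A \<in> F" "B \<in> F" "C \<in> F" "A \<noteq> B" "A \<noteq> C" "B \<noteq> C"
      using A B C \<open>A' \<noteq> B'\<close> \<open>A' \<noteq> C'\<close> \<open>B' \<noteq> C'\<close> by auto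
    have "A' \<inter> B' \<inter> C' = \<sigma> ` (A \<inter> B) \<inter> \<sigma> ` C" using image_Int A B C by simp
    also have "\<dots> = \<sigma> ` (A \<inter> B \<inter> C)"
      using inj ABC(1,3) by (intro inj_on_image_Int[symmetric]) auto
    finally show "A' \<inter> B' \<inter> C' = {}" using no_triple[OF ABC] by simp
  qed
qed

end

(* The smallest vertex
   w must be shared (a member A has only m - 1 points besides w, fewer than its r - 1
   shared ones), so two members agree in position 0. *)
lemma not_closed_if_many_facets:
  fixes F :: "nat set set"
  assumes opf: "one_point_family m F" and fin: "finite F" and m3: "m \<ge> 3" and many: "m < card F"
  shows "\<not> closed_wrt m F"
proof
  assume closed: "closed_wrt m F"
  interpret one_point_family m F by (fact opf)
  have fin_U: "finite (\<Union>F)" using fin facet_finite by blast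
  obtain A0 where "A0 \<in> F" using many by fastforce
  moreover have "A0 \<noteq> {}" using facet_card[OF \<open>A0 \<in> F\<close>] m3 by auto
  ultimately have "\<Union>F \<noteq> {}" by blast
  define w where "w = Min (\<Union>F)"
  have "w \<in> \<Union>F" unfolding w_def using fin_U \<open>\<Union>F \<noteq> {}\<close> by (rule Min_in)
  then obtain A where A: "A \<in> F" "w \<in> A" by blast
  have w_min: "w \<le> y" if "y \<in> \<Union>F" for y unfolding w_def using fin_U that by simp
  have "w \<in> shared A"
  proof (rule ccontr)
    assume "w \<notin> shared A"
    then have "shared A \<subseteq> A - {w}" unfolding shared_def by blast
    then have "card (shared A) \<le> card (A - {w})" using facet_finite[OF A(1)] by (intro card_mono) auto
    then have "card F - 1 \<le> m - 1"
      using card_shared[OF fin A(1)] facet_card[OF A(1)] facet_finite[OF A(1)] A(2)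
      by (simp add: card_Diff_singleton)
    then show False using many m3 by linarith
  qed
  then obtain B where B: "B \<in> F" "B \<noteq> A" "w \<in> B" unfolding shared_def by blast
  have first: "ith X 0 = w" if "X \<in> F" "w \<in> X" for X
  proof (rule ith_eqI)
    show "finite X" using facet_finite[OF that(1)] .
    show "card {y \<in> X. y < w} = 0" using w_min that by fastforce
  qed (fact that(2))
  obtain C where C: "C \<subseteq> A \<union> B" "card C = m" "C \<notin> F"
    using exchange_not_facet[OF m3 A(1) B(1) B(2)[symmetric]] by blast
  have "\<exists>i<m. ith A i = ith B i" using first A B m3 by (intro exI[of _ 0]) simp
  then have "C \<in> F" using closed A(1) B(1) C(1,2) unfolding closed_wrt_def by blast
  then show False using C(3) by contradiction
qed

definition facet_key :: "('a set \<Rightarrow> nat) \<Rightarrow> 'a set set \<Rightarrow> 'a \<Rightarrow> nat \<times> nat \<times> 'a" where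
  "facet_key idx F x = (Min (idx ` {A \<in> F. x \<in> A}), card {A \<in> F. x \<in> A}, x)"

context one_point_family
begin

lemma facet_key_private:
  assumes "A \<in> F" "y \<in> A" "y \<notin> shared A"
  shows "facet_key idx F y = (idx A, 1, y)"
proof -
  have "{D \<in> F. y \<in> D} = {A}" using assms unfolding shared_def by auto
  then show ?thesis by (simp add: facet_key_def)
qed

lemma facet_key_shared:
  assumes "A \<in> F" "C \<in> F" "A \<noteq> C" "y \<in> A" "y \<in> C"
  shows "facet_key idx F y = (min (idx A) (idx C), 2, y)"
proof -
  have "D \<in> {A, C}" if "D \<in> F" "y \<in> D" for D
    using no_triple[OF assms(1,2) that(1) assms(3)] assms(4,5) that by blast
  then have "{D \<in> F. y \<in> D} = {A, C}" using assms by auto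
  then show ?thesis using assms(3) by (simp add: facet_key_def)
qed

end

(* The vertex v common to A and a later member B has at most idx A smaller vertices in
   B: each one is the meeting point of B with a member of index below idx A. *)
lemma rank_in_later_facet:
  fixes F :: "nat set set"
  assumes opf: "one_point_family m F" and fin: "finite F" and inj: "inj_on idx F"
    and AB: "A \<in> F" "B \<in> F" "v \<in> A" "v \<in> B" and less: "idx A < idx B"
  shows "card {y \<in> B. facet_key idx F y < facet_key idx F v} \<le> card {C \<in> F. idx C < idx A}"
proof -
  interpret one_point_family m F by (fact opf)
  let ?key = "facet_key idx F" and ?E = "{C \<in> F. idx C < idx A}"
  have "A \<noteq> B" using less by auto
  have kv: "?key v = (idx A, 2, v)"
    using facet_key_shared[OF AB(1,2) \<open>A \<noteq> B\<close> AB(3,4)] less by simp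
  have "{y \<in> B. ?key y < ?key v} \<subseteq> meet B ` ?E"
  proof
    fix y assume y: "y \<in> {y \<in> B. ?key y < ?key v}"
    show "y \<in> meet B ` ?E"
    proof (cases "y \<in> shared B")
      case False
      then have "?key y = (idx B, 1, y)" using facet_key_private[OF AB(2)] y by simp
      then show ?thesis using y kv less by simp
    next
      case True
      then obtain C where C: "C \<in> F" "B \<noteq> C" "y \<in> C" unfolding shared_def by blast
      have ky: "?key y = (min (idx B) (idx C), 2, y)"
        using facet_key_shared[OF AB(2) C(1,2)] y C(3) by simp
      have "idx C < idx A"
      proof (rule ccontr)
        assume "\<not> idx C < idx A"
        then have "idx C = idx A" "y < v" using ky kv less y by (auto simp: min_def split: if_splits)
        then have "C = A" using inj C(1) AB(1) by (simp add: inj_on_eq_iff)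
        then have "y = meet A B" "v = meet A B"
          using meet_unique[OF AB(1,2) \<open>A \<noteq> B\<close>] y C(3) AB(3,4) by auto
        then have "y = v" by simp
        then show False using \<open>y < v\<close> by simp
      qed
      moreover have "y = meet B C" using meet_unique[OF AB(2) C(1,2)] y C(3) by simp
      ultimately show ?thesis using C(1) by blast
    qed
  qed
  then have "card {y \<in> B. ?key y < ?key v} \<le> card (meet B ` ?E)"
    using fin by (intro card_mono) auto
  also have "\<dots> \<le> card ?E" using fin by (intro card_image_le) simp
  finally show ?thesis .
qed

(* In A, however, v lies above the meeting points with all members of smaller index and
   above a private vertex of A, which exists because r \<le> m. *)
lemma rank_in_earlier_facet:
  fixes F :: "nat set set"
  assumes opf: "one_point_family m F" and fin: "finite F" and few: "card F \<le> m"
    and inj: "inj_on idx F"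
    and AB: "A \<in> F" "B \<in> F" "v \<in> A" "v \<in> B" and less: "idx A < idx B"
  shows "card {C \<in> F. idx C < idx A} < card {y \<in> A. facet_key idx F y < facet_key idx F v}"
proof -
  interpret one_point_family m F by (fact opf)
  let ?key = "facet_key idx F" and ?E = "{C \<in> F. idx C < idx A}"
  have "A \<noteq> B" using less by auto
  have kv: "?key v = (idx A, 2, v)"
    using facet_key_shared[OF AB(1,2) \<open>A \<noteq> B\<close> AB(3,4)] less by simp
  have "card F > 0" using fin AB(1) by (auto simp: card_gt_0_iff)
  then have "card (shared A) < card A"
    using card_shared[OF fin AB(1)] facet_card[OF AB(1)] few by linarith
  then have "shared A \<noteq> A" by auto
  then obtain p where p: "p \<in> A" "p \<notin> shared A" unfolding shared_def by blast
  have E_sub: "?E \<subseteq> F - {A}" by auto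
  have sub: "insert p (meet A ` ?E) \<subseteq> {y \<in> A. ?key y < ?key v}"
  proof
    fix y assume "y \<in> insert p (meet A ` ?E)"
    then consider "y = p" | C where "C \<in> F" "idx C < idx A" "y = meet A C" by blast
    then show "y \<in> {y \<in> A. ?key y < ?key v}"
    proof cases
      case 1
      then show ?thesis using facet_key_private[OF AB(1) p] kv p(1) by simp
    next
      case 2
      then have "A \<noteq> C" by auto
      then have "y \<in> A" "y \<in> C" using meet_mem[OF AB(1) 2(1)] 2(3) by auto
      then have "?key y = (idx C, 2, y)"
        using facet_key_shared[OF AB(1) 2(1) \<open>A \<noteq> C\<close>] 2(2) by simp
      then show ?thesis using kv 2(2) \<open>y \<in> A\<close> by simp
    qed
  qed
  have "p \<notin> meet A ` ?E" using p(2) shared_eq_meets[OF AB(1)] E_sub by blast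
  then have "card (insert p (meet A ` ?E)) = Suc (card ?E)"
    using fin inj_on_subset[OF inj_on_meet[OF AB(1)] E_sub] by (simp add: card_image)
  moreover have "card (insert p (meet A ` ?E)) \<le> card {y \<in> A. ?key y < ?key v}"
    using sub facet_finite[OF AB(1)] by (intro card_mono) auto
  ultimately show ?thesis by simp
qed

lemma key_ranks_differ:
  fixes F :: "nat set set"
  assumes opf: "one_point_family m F" and fin: "finite F" and few: "card F \<le> m"
    and inj: "inj_on idx F"
    and AB: "A \<in> F" "B \<in> F" "A \<noteq> B" "v \<in> A" "v \<in> B"
  shows "card {y \<in> A. facet_key idx F y < facet_key idx F v}
      \<noteq> card {y \<in> B. facet_key idx F y < facet_key idx F v}"
proof -
  have "idx A \<noteq> idx B" using inj_on_eq_iff[OF inj AB(1,2)] AB(3) by simp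
  then consider "idx A < idx B" | "idx B < idx A" by linarith
  then show ?thesis
  proof cases
    case 1
    then show ?thesis
      using rank_in_later_facet[OF opf fin inj AB(1,2,4,5)]
        rank_in_earlier_facet[OF opf fin few inj AB(1,2,4,5)] by linarith
  next
    case 2
    then show ?thesis
      using rank_in_later_facet[OF opf fin inj AB(2,1,5,4)]
        rank_in_earlier_facet[OF opf fin few inj AB(2,1,5,4)] by linarith
  qed
qed

lemma rank_relabel:
  fixes key :: "nat \<Rightarrow> 'b::linorder"
  assumes inj: "inj_on key {1..n}"
  defines "\<sigma> \<equiv> \<lambda>x. Suc (card {y \<in> {1..n}. key y < key x})"
  shows "bij_betw \<sigma> {1..n} {1..n}"
    and "\<And>x y. x \<in> {1..n} \<Longrightarrow> y \<in> {1..n} \<Longrightarrow> \<sigma> x < \<sigma> y \<longleftrightarrow> key x < key y"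
proof -
  have mono: "\<sigma> x < \<sigma> y" if "x \<in> {1..n}" "y \<in> {1..n}" "key x < key y" for x y
  proof -
    have "{z \<in> {1..n}. key z < key x} \<subset> {z \<in> {1..n}. key z < key y}"
      using that by auto
    then show ?thesis unfolding \<sigma>_def by (simp add: psubset_card_mono)
  qed
  have key_cases: "x = y \<or> key x < key y \<or> key y < key x" if "x \<in> {1..n}" "y \<in> {1..n}" for x y
    using inj that by (cases "key x" "key y" rule: linorder_cases) (auto simp: inj_on_eq_iff)
  show "\<sigma> x < \<sigma> y \<longleftrightarrow> key x < key y" if "x \<in> {1..n}" "y \<in> {1..n}" for x y
  proof
    assume less: "\<sigma> x < \<sigma> y"
    show "key x < key y"
    proof (rule ccontr)
      assume "\<not> key x < key y"
      then have "x = y \<or> key y < key x" using key_cases[OF that] by blast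
      then show False using mono[OF that(2,1)] less by auto
    qed
  qed (rule mono[OF that])
  have inj_\<sigma>: "inj_on \<sigma> {1..n}"
  proof (rule inj_onI)
    fix x y assume x: "x \<in> {1..n}" and y: "y \<in> {1..n}" and eq: "\<sigma> x = \<sigma> y"
    show "x = y"
    proof (rule ccontr)
      assume "x \<noteq> y"
      then have "key x < key y \<or> key y < key x" using key_cases[OF x y] by blast
      then show False using mono[OF x y] mono[OF y x] eq by auto
    qed
  qed
  have "\<sigma> x \<in> {1..n}" if "x \<in> {1..n}" for x
  proof -
    have "{y \<in> {1..n}. key y < key x} \<subseteq> {1..n} - {x}" by auto
    then have "card {y \<in> {1..n}. key y < key x} \<le> card ({1..n} - {x})" by (intro card_mono) auto
    then show ?thesis using that unfolding \<sigma>_def by (simp; linarith)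
  qed
  then have "\<sigma> ` {1..n} = {1..n}" using inj_\<sigma> by (intro endo_inj_surj) auto
  then show "bij_betw \<sigma> {1..n} {1..n}" using inj_\<sigma> by (simp add: bij_betw_def)
qed

lemma closed_labeling_exists:
  fixes F :: "nat set set"
  assumes opf: "one_point_family m F" and fin: "finite F" and sub: "\<Union>F \<subseteq> {1..n}"
    and few: "card F \<le> m"
  shows "\<exists>\<sigma>. bij_betw \<sigma> {1..n} {1..n} \<and> closed_wrt m ((`) \<sigma> ` F)"
proof -
  interpret one_point_family m F by (fact opf)
  obtain idx :: "nat set \<Rightarrow> nat" where idx: "inj_on idx F"
    using finite_imp_inj_to_nat_seg[OF fin] by blast
  let ?key = "facet_key idx F"
  have "inj_on ?key {1..n}" by (rule inj_onI) (simp add: facet_key_def)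
  define \<sigma> where "\<sigma> = (\<lambda>x. Suc (card {y \<in> {1..n}. ?key y < ?key x}))"
  have bij: "bij_betw \<sigma> {1..n} {1..n}"
    and order: "\<And>x y. x \<in> {1..n} \<Longrightarrow> y \<in> {1..n} \<Longrightarrow> \<sigma> x < \<sigma> y \<longleftrightarrow> ?key x < ?key y"
    using rank_relabel[OF \<open>inj_on ?key {1..n}\<close>] unfolding \<sigma>_def by blast+
  have inj_\<sigma>: "inj_on \<sigma> (\<Union>F)"
    using bij_betw_imp_inj_on[OF bij] sub by (rule inj_on_subset)
  have rank_image: "card {y \<in> \<sigma> ` A. y < \<sigma> v} = card {y \<in> A. ?key y < ?key v}"
    if A: "A \<in> F" and v: "v \<in> A" for A v
  proof -
    have A_sub: "A \<subseteq> {1..n}" using sub A by blast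
    have less_iff: "\<sigma> y < \<sigma> v \<longleftrightarrow> ?key y < ?key v" if "y \<in> A" for y
      using order[of y v] A_sub v that by blast
    have "{y \<in> \<sigma> ` A. y < \<sigma> v} = \<sigma> ` {y \<in> A. ?key y < ?key v}"
    proof
      show "{y \<in> \<sigma> ` A. y < \<sigma> v} \<subseteq> \<sigma> ` {y \<in> A. ?key y < ?key v}"
        using less_iff by blast
      show "\<sigma> ` {y \<in> A. ?key y < ?key v} \<subseteq> {y \<in> \<sigma> ` A. y < \<sigma> v}"
        using less_iff by blast
    qed
    moreover have "inj_on \<sigma> {y \<in> A. ?key y < ?key v}"
      using inj_\<sigma> by (rule inj_on_subset) (use A in blast)
    ultimately show ?thesis by (simp add: card_image)
  qed
  note relabelled = relabel[OF inj_\<sigma>]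
  have "closed_wrt m ((`) \<sigma> ` F)"
  proof (rule closed_wrtI_positions)
    fix A' assume "A' \<in> (`) \<sigma> ` F"
    then show "finite A' \<and> card A' = m"
      using one_point_family.facet_finite[OF relabelled(1)]
        one_point_family.facet_card[OF relabelled(1)] by blast
  next
    fix A' B' v'
    assume A': "A' \<in> (`) \<sigma> ` F" and B': "B' \<in> (`) \<sigma> ` F" and "A' \<noteq> B'"
      and "v' \<in> A'" "v' \<in> B'"
    obtain A where A: "A \<in> F" "A' = \<sigma> ` A" using A' by blast
    obtain B where B: "B \<in> F" "B' = \<sigma> ` B" using B' by blast
    have "A \<noteq> B" using \<open>A' \<noteq> B'\<close> A B by auto
    obtain v where v: "v \<in> A" "v' = \<sigma> v" using \<open>v' \<in> A'\<close> A by blast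
    have "v \<in> \<Union>F" "B \<subseteq> \<Union>F" using v(1) A(1) B(1) by blast+
    then have "v \<in> B"
      using \<open>v' \<in> B'\<close> v(2) B(2) inj_on_image_mem_iff[OF inj_\<sigma>] by simp
    then show "card {y \<in> A'. y < v'} \<noteq> card {y \<in> B'. y < v'}"
      using key_ranks_differ[OF opf fin few idx A(1) B(1) \<open>A \<noteq> B\<close> v(1)]
        rank_image[OF A(1) v(1)] rank_image[OF B(1)] A(2) B(2) v(2) by simp
  qed
  then show ?thesis using bij by blast
qed

lemma skel_of_card:
  assumes "finite A" "card A = m"
  shows "skel m A = {A}"
  using card_subset_eq[OF assms(1)] assms unfolding skel_def by auto

lemma card_eq_if_skel_single:
  assumes fin: "finite G" and m1: "1 \<le> m" and big: "m \<le> card G" and single: "card (skel m G) \<le> 1"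
  shows "card G = m"
proof (rule ccontr)
  assume "card G \<noteq> m"
  then have "m < card G" using big by simp
  obtain A where A: "A \<subseteq> G" "card A = m" using obtain_subset_with_card_n[OF big] by blast
  then have "A \<noteq> G" using \<open>m < card G\<close> by auto
  then obtain x where x: "x \<in> G" "x \<notin> A" using A(1) by blast
  have "finite A" using A(1) fin finite_subset by blast
  then have "A \<noteq> {}" using A(2) m1 by auto
  then obtain y where y: "y \<in> A" by blast
  define A' where "A' = insert x (A - {y})"
  have "card A' = m" using \<open>finite A\<close> A(2) x(2) y m1 by (simp add: A'_def card_Diff_singleton)
  then have in_skel: "A' \<in> skel m G" "A \<in> skel m G"
    using A x y unfolding skel_def A'_def by auto
  have "x \<in> A'" by (simp add: A'_def)
  then have "A' \<noteq> A" using x(2) by blast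
  have "skel m G \<subseteq> Pow G" unfolding skel_def by blast
  then have "finite (skel m G)" by (rule finite_subset) (simp add: fin)
  then have "card (skel m G) \<le> Suc 0 \<longleftrightarrow> (\<forall>B\<in>skel m G. \<forall>C\<in>skel m G. B = C)"
    by (rule card_le_Suc0_iff_eq)
  then show False using single in_skel \<open>A' \<noteq> A\<close> by auto
qed

lemma maxsimp_eq_facets:
  assumes pure: "pure_complex n m F" and m1: "1 \<le> m"
    and single: "\<forall>D\<in>cliques n m F. card D = 1"
  shows "maxsimp n m F = F"
proof -
  have facet: "A \<subseteq> {1..n}" "finite A" "card A = m" if "A \<in> F" for A
    using pure that finite_subset unfolding pure_complex_def by auto
  have card_max: "card G = m" if G: "G \<in> maxsimp n m F" for G
  proof -
    have G_sub: "G \<subseteq> {1..n}" and "m \<le> card G"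
      using G unfolding maxsimp_def simplS_def by auto
    have "skel m G \<in> cliques n m F" using G unfolding cliques_def by blast
    then have "card (skel m G) \<le> 1" using single by simp
    moreover have "finite G" using G_sub finite_subset by blast
    ultimately show ?thesis using card_eq_if_skel_single m1 \<open>m \<le> card G\<close> by blast
  qed
  have fin_S: "finite (simplS n m F)"
  proof -
    have "simplS n m F \<subseteq> Pow {1..n}" unfolding simplS_def by blast
    then show ?thesis by (rule finite_subset) simp
  qed
  show ?thesis
  proof
    show "maxsimp n m F \<subseteq> F"
    proof
      fix G assume G: "G \<in> maxsimp n m F"
      then have "G \<subseteq> {1..n}" "skel m G \<subseteq> F" unfolding maxsimp_def simplS_def by auto
      moreover have "skel m G = {G}"
        using \<open>G \<subseteq> {1..n}\<close> card_max[OF G] by (intro skel_of_card) (auto intro: finite_subset)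
      ultimately show "G \<in> F" by simp
    qed
  next
    show "F \<subseteq> maxsimp n m F"
    proof
      fix A assume A: "A \<in> F"
      have A_S: "A \<in> simplS n m F"
        using facet[OF A] skel_of_card[of A m] A unfolding simplS_def by auto
      have "H = A" if H: "H \<in> simplS n m F" "A \<subseteq> H" for H
      proof -
        obtain M where M: "M \<in> simplS n m F" "H \<subseteq> M" "\<forall>M'\<in>simplS n m F. M \<subseteq> M' \<longrightarrow> M = M'"
          using finite_has_maximal2[OF fin_S H(1)] by blast
        then have "M \<in> maxsimp n m F" unfolding maxsimp_def by auto
        then have "card M = m" by (rule card_max)
        moreover have "finite M" using M(1) finite_subset unfolding simplS_def by blast
        moreover have "A \<subseteq> M" using H(2) M(2) by blast
        ultimately have "A = M" using card_subset_eq facet(3)[OF A] by metis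
        then show "H = A" using H(2) M(2) by blast
      qed
      then show "A \<in> maxsimp n m F" using A_S unfolding maxsimp_def by blast
    qed
  qed
qed

lemma cliques_eq_facets:
  assumes pure: "pure_complex n m F" and "1 \<le> m"
    and "\<forall>D\<in>cliques n m F. card D = 1"
  shows "cliques n m F = (\<lambda>A. {A}) ` F"
proof -
  have "skel m A = {A}" if "A \<in> F" for A
    using pure that finite_subset unfolding pure_complex_def by (intro skel_of_card) auto
  then show ?thesis
    unfolding cliques_def maxsimp_eq_facets[OF assms] by (rule image_cong[OF refl])
qed

lemma one_point_family_of_conditions:
  assumes pure: "pure_complex n m F" and cl: "cliques n m F = (\<lambda>A. {A}) ` F"
    and ci: "cond_i n m F" and cii: "cond_ii n m F" and complete: "G_complete n m F"
  shows "one_point_family m F"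
proof
  fix A assume "A \<in> F"
  then show "finite A" "card A = m"
    using pure finite_subset unfolding pure_complex_def by auto
next
  fix A B assume AB: "A \<in> F" "B \<in> F" "A \<noteq> B"
  then have cliques_AB: "{A} \<in> cliques n m F" "{B} \<in> cliques n m F" "{A} \<noteq> {B}"
    using cl by auto
  have "card (Vtx {A} \<inter> Vtx {B}) \<le> 1"
    using ci[unfolded cond_i_def, rule_format, OF cliques_AB] .
  moreover have "Vtx {A} \<inter> Vtx {B} \<noteq> {}"
    using complete[unfolded G_complete_def, rule_format, OF cliques_AB] .
  ultimately have at_most_one: "card (A \<inter> B) \<le> 1" and nonempty: "A \<inter> B \<noteq> {}"
    by (simp_all add: Vtx_def)
  have "A \<subseteq> {1..n}" using pure AB(1) unfolding pure_complex_def by blast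
  then have "finite (A \<inter> B)" using finite_subset by blast
  then have "card (A \<inter> B) > 0" using nonempty by (simp add: card_gt_0_iff)
  then show "card (A \<inter> B) = 1" using at_most_one by linarith
next
  fix A B C assume "A \<in> F" "B \<in> F" "C \<in> F" "A \<noteq> B" "A \<noteq> C" "B \<noteq> C"
  then have "{A} \<in> cliques n m F" "{B} \<in> cliques n m F" "{C} \<in> cliques n m F"
    "{A} \<noteq> {B} \<and> {A} \<noteq> {C} \<and> {B} \<noteq> {C}" using cl by auto
  then have "Vtx {A} \<inter> Vtx {B} \<inter> Vtx {C} = {}"
    using cii[unfolded cond_ii_def, rule_format] by blast
  then show "A \<inter> B \<inter> C = {}" by (simp add: Vtx_def)
qed

theorem corollary3p5:
  fixes n m :: nat and F :: "nat set set"
  assumes "pure_complex n m F"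
    and "m \<ge> 3"
    and "cond_i n m F"
    and "cond_ii n m F"
    and "\<forall>D\<in>cliques n m F. card D = 1"
    and "G_complete n m F"
  shows "is_closed n m F \<longleftrightarrow> m \<ge> card (cliques n m F)"
proof -
  have sub: "\<Union>F \<subseteq> {1..n}" using assms(1) unfolding pure_complex_def by blast
  then have fin: "finite F" by (simp add: finite_UnionD finite_subset)
  have cl: "cliques n m F = (\<lambda>A. {A}) ` F"
    using assms(1,2,5) by (intro cliques_eq_facets) auto
  then have r: "card (cliques n m F) = card F" by (simp add: card_image)
  have opf: "one_point_family m F"
    using one_point_family_of_conditions[OF assms(1) cl assms(3,4,6)] .
  show ?thesis unfolding r
  proof
    assume "is_closed n m F"
    then obtain \<sigma> where \<sigma>: "bij_betw \<sigma> {1..n} {1..n}" "closed_wrt m ((`) \<sigma> ` F)"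
      unfolding is_closed_def by blast
    have "inj_on \<sigma> (\<Union>F)" using bij_betw_imp_inj_on[OF \<sigma>(1)] sub by (rule inj_on_subset)
    note relabelled = one_point_family.relabel[OF opf this]
    show "card F \<le> m"
      using not_closed_if_many_facets[OF relabelled(1) _ assms(2)] relabelled(2) \<sigma>(2) fin
      by fastforce
  next
    assume "card F \<le> m"
    then show "is_closed n m F"
      using closed_labeling_exists[OF opf fin sub] unfolding is_closed_def by blast
  qed
qed

end
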